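(* For an $L$-layer LISTA network at initialization (all weight entries i.i.d. $\mathcal N(0,1)$), for any $l\in[L]$ and $i\in[m]$ we have $|x_i^l|\le\ln(m)+|\sigma(0)|$ with probability at least $1-2e^{-c^l_{\mathbf x}\ln^2(m)}$ for some constant $c^l_{\mathbf x}>0$.
   Context: Fix $\lambda>0$ and $\sigma(x)=\log(1+e^{x-\lambda})-\log(1+e^{-x-\lambda})$ (componentwise), $L_\sigma$-Lipschitz. Input $\mathbf y\in\mathbb R^n$ with $|y_i|\le C_y$, initial vector $\mathbf x^0\in\mathbb R^m$ with $|x^0_i|\le C_x$. LISTA layers: $\mathbf x^l=\sigma\big(\frac1{\sqrt n}W_1^l\mathbf y+\frac1{\sqrt m}W_2^l\mathbf x^{l-1}\big)$, $l\in[L]$, with $W_1^l\in\mathbb R^{m\times n}$, $W_2^l\in\mathbb R^{m\times m}$; "at initialization" means all entries of $W_1^l,W_2^l$ are i.i.d. $\mathcal N(0,1)$. *)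

theory Defs
  imports "HOL-Probability.Probability"
begin

definition lista_sigma :: "real \<Rightarrow> real \<Rightarrow> real" where
  "lista_sigma lam x = ln (1 + exp (x - lam)) - ln (1 + exp (- x - lam))"

text \<open>Vectors in R^n / R^m are functions on indices 0..n-1 / 0..m-1.
  W1 l i j (i < m, j < n) and W2 l i j (i < m, j < m) are the entries of the
  layer-l weight matrices (layers l = 1..L).\<close>
fun lista_x :: "real \<Rightarrow> nat \<Rightarrow> nat \<Rightarrow> (nat \<Rightarrow> real) \<Rightarrow> (nat \<Rightarrow> real)
    \<Rightarrow> (nat \<Rightarrow> nat \<Rightarrow> nat \<Rightarrow> real) \<Rightarrow> (nat \<Rightarrow> nat \<Rightarrow> nat \<Rightarrow> real) \<Rightarrow> nat \<Rightarrow> nat \<Rightarrow> real" where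
  "lista_x lam m n y x0 W1 W2 0 = x0"
| "lista_x lam m n y x0 W1 W2 (Suc l) =
     (\<lambda>i. lista_sigma lam
        ((1 / sqrt (real n)) * (\<Sum>j<n. W1 (Suc l) i j * y j)
       + (1 / sqrt (real m)) * (\<Sum>j<m. W2 (Suc l) i j * lista_x lam m n y x0 W1 W2 l j)))"

text \<open>Index set of all weight entries of an L-layer network:
  Inl (l,i,j) for W1 entries, Inr (l,i,j) for W2 entries.\<close>
definition lista_index :: "nat \<Rightarrow> nat \<Rightarrow> nat \<Rightarrow> ((nat \<times> nat \<times> nat) + (nat \<times> nat \<times> nat)) set" where
  "lista_index L m n =
     Inl ` {(l, i, j). l \<in> {1..L} \<and> i < m \<and> j < n}
   \<union> Inr ` {(l, i, j). l \<in> {1..L} \<and> i < m \<and> j < m}"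

definition lista_weight :: "(nat \<Rightarrow> nat \<Rightarrow> nat \<Rightarrow> 'a \<Rightarrow> real) \<Rightarrow> (nat \<Rightarrow> nat \<Rightarrow> nat \<Rightarrow> 'a \<Rightarrow> real)
    \<Rightarrow> ((nat \<times> nat \<times> nat) + (nat \<times> nat \<times> nat)) \<Rightarrow> 'a \<Rightarrow> real" where
  "lista_weight W1 W2 k = (case k of Inl (l, i, j) \<Rightarrow> W1 l i j | Inr (l, i, j) \<Rightarrow> W2 l i j)"

definition lista_init :: "'a measure \<Rightarrow> nat \<Rightarrow> nat \<Rightarrow> nat
    \<Rightarrow> (nat \<Rightarrow> nat \<Rightarrow> nat \<Rightarrow> 'a \<Rightarrow> real) \<Rightarrow> (nat \<Rightarrow> nat \<Rightarrow> nat \<Rightarrow> 'a \<Rightarrow> real) \<Rightarrow> bool" where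
  "lista_init M L m n W1 W2 \<longleftrightarrow>
     prob_space M \<and>
     prob_space.indep_vars M (\<lambda>_. borel) (lista_weight W1 W2) (lista_index L m n) \<and>
     (\<forall>k \<in> lista_index L m n.
        distributed M lborel (lista_weight W1 W2 k) (\<lambda>x. ennreal (std_normal_density x)))"

end

theory Submission
  imports Defs
begin

text \<open>Since |sigma z| <= |z|, it suffices to control the preactivations z_i of layer l. Conditionally
  on the weights of the earlier layers, the preactivations of one layer are independent centred
  Gaussians of variance v = |y|^2/n + |x^(l-1)|^2/m. Hence on the event v <= U the exponential
  moment E exp (sum_(i in S) z_i^2 / (4 U)) is at most sqrt 2 ^ |S|, and a Chernoff bound follows.
  Taking for S the whole layer propagates the bound |x^k|^2 <= B_k m from layer to layer except with
  probability exp (- m / 2); taking S = {i} then gives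
  P (|x_i^l| > t) <= (l - 1) exp (- m / 2) + sqrt 2 exp (- t^2 / (4 U)), and t = ln m yields the
  claim.\<close>

lemma sqrt_2_power_le_exp: "sqrt 2 ^ k \<le> exp (real k / 2)"
proof -
  have "2 \<le> exp (1 / 2 :: real) ^ 2"
    using exp_ge_add_one_self[of 1] by (simp flip: exp_of_nat_mult)
  then have "sqrt 2 \<le> exp (1 / 2)"
    by (intro real_le_lsqrt) auto
  then have "sqrt 2 ^ k \<le> exp (1 / 2) ^ k"
    by (intro power_mono) auto
  then show ?thesis
    by (simp flip: exp_of_nat_mult)
qed

lemma ln_sq_le:
  fixes x :: real
  assumes "x \<ge> 1"
  shows "(ln x)\<^sup>2 \<le> 4 * x"
proof -
  have "ln x = 2 * ln (sqrt x)"
    using assms by (simp add: ln_sqrt)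
  also have "\<dots> \<le> 2 * sqrt x"
    using assms ln_le_minus_one[of "sqrt x"] by simp
  finally have "(ln x)\<^sup>2 \<le> (2 * sqrt x)\<^sup>2"
    using assms by (intro power_mono) auto
  then show ?thesis
    using assms by (simp add: power_mult_distrib)
qed

lemma mult_exp_neg_half_le:
  fixes a x :: real
  assumes "a \<ge> 0" and "4 * (a + 1) \<le> x"
  shows "a * exp (- x / 2) \<le> exp (- x / 8) / 2"
proof -
  have "a * exp (- x / 2) \<le> exp a * exp (- x / 2)"
    using exp_ge_add_one_self[of a] by (intro mult_right_mono) (linarith, simp)
  also have "\<dots> = exp (a - 3 * x / 8) * exp (- x / 8)"
    by (simp flip: exp_add)
  also have "\<dots> \<le> exp (- 1) * exp (- x / 8)"
    using assms by (intro mult_right_mono) auto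
  also have "exp (- 1 :: real) \<le> 1 / 2"
    using exp_ge_add_one_self[of 1] by (simp add: exp_minus field_simps)
  finally show ?thesis
    by (simp add: mult_right_mono)
qed

lemma sum_tails_le_two_exp:
  fixes a x t U D :: real
  assumes x: "4 * (a + 1) < x" and t: "t\<^sup>2 \<le> 4 * x" and a: "a \<ge> 0" and U: "U > 0"
    and D: "D \<ge> 32" "D \<ge> 4 * U"
  shows "a * exp (- x / 2) + sqrt 2 * exp (- t\<^sup>2 / (4 * U)) \<le> 2 * exp (- t\<^sup>2 / D)"
proof -
  have "a * exp (- x / 2) \<le> exp (- x / 8) / 2"
    using a x by (intro mult_exp_neg_half_le) auto
  moreover have "exp (- x / 8) \<le> exp (- t\<^sup>2 / D)"
  proof -
    have "t\<^sup>2 / D \<le> t\<^sup>2 / 32"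
      using D by (intro divide_left_mono) auto
    also have "\<dots> \<le> x / 8"
      using t by simp
    finally show ?thesis
      by simp
  qed
  moreover have "sqrt 2 * exp (- t\<^sup>2 / (4 * U)) \<le> 3 / 2 * exp (- t\<^sup>2 / D)"
    using U D by (intro mult_mono real_le_lsqrt) (auto simp: frac_le power2_eq_square)
  ultimately show ?thesis
    by linarith
qed

lemma tail_le_two_exp_neg_ln_sq:
  fixes a x U P :: real
  assumes U: "U > 0" and x: "x \<ge> 1" and a: "a \<ge> 0" and P1: "P \<le> 1"
    and P: "P \<le> a * exp (- x / 2) + sqrt 2 * exp (- (ln x)\<^sup>2 / (4 * U))"
  shows "P \<le> 2 * exp (- (ln x)\<^sup>2 / (32 * (a + 1)\<^sup>2 * (1 + 4 * U)))"
proof -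
  define t where "t = ln x"
  define D where "D = 32 * (a + 1)\<^sup>2 * (1 + 4 * U)"
  have D: "D \<ge> 32" "D \<ge> 4 * U"
    using U a by (auto simp: D_def power2_eq_square algebra_simps intro: order_trans[OF _ mult_right_mono])
  have "P \<le> 2 * exp (- t\<^sup>2 / D)"
  proof (cases "t\<^sup>2 / D \<le> 1 / 2")
    case True
    have "1 \<le> 2 * exp (- (1 / 2) :: real)"
      using exp_half_le2 by (simp add: exp_minus field_simps)
    also have "\<dots> \<le> 2 * exp (- t\<^sup>2 / D)"
      using True by simp
    finally show ?thesis
      using P1 by simp
  next
    case False
    have "(4 * (a + 1))\<^sup>2 = 16 * (a + 1)\<^sup>2 * 1"
      by (simp only: power_mult_distrib) simp
    also have "\<dots> \<le> 16 * (a + 1)\<^sup>2 * (1 + 4 * U)"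
      using U by (intro mult_left_mono) auto
    also have "\<dots> = D / 2"
      by (simp add: D_def)
    also have "\<dots> < t\<^sup>2"
      using False D by (simp add: field_simps)
    finally have "(4 * (a + 1))\<^sup>2 < t\<^sup>2" .
    then have "4 * (a + 1) < t"
      by (rule power2_less_imp_less) (use x in \<open>simp add: t_def\<close>)
    also have "t < x"
      using x by (simp add: t_def ln_less_self)
    finally show ?thesis
      using sum_tails_le_two_exp[OF _ ln_sq_le[OF x] a U D] P unfolding t_def by linarith
  qed
  then show ?thesis
    by (simp add: t_def D_def)
qed

lemma Diff_subset_UN_Diff_Suc: "A 0 - A k \<subseteq> (\<Union>k'<k. A k' - A (Suc k'))"
  by (induction k) (auto simp: lessThan_Suc)

section \<open>Exponential moments of squared Gaussian sums\<close>

lemma normal_density_mult_exp_square: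
  assumes "\<sigma> > 0" and "q > 0" and "q = 1 - 2 * s * \<sigma>\<^sup>2"
  shows "normal_density 0 \<sigma> x * exp (s * x\<^sup>2) = normal_density 0 (\<sigma> / sqrt q) x / sqrt q"
proof -
  have norm: "sqrt (2 * pi * (\<sigma> / sqrt q)\<^sup>2) = sqrt (2 * pi * \<sigma>\<^sup>2) / sqrt q"
    using assms by (simp add: power_divide real_sqrt_divide)
  have s: "s = (1 - q) / (2 * \<sigma>\<^sup>2)"
    using assms by (simp add: field_simps)
  have expo: "- (x - 0)\<^sup>2 / (2 * (\<sigma> / sqrt q)\<^sup>2) = - (x - 0)\<^sup>2 / (2 * \<sigma>\<^sup>2) + s * x\<^sup>2"
    using assms(1,2) unfolding s by (simp add: power_divide field_simps)
  show ?thesis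
    unfolding normal_density_def norm expo exp_add using assms by (simp add: field_simps)
qed

lemma (in prob_space) nn_integral_exp_square_gaussian_sum:
  assumes fin: "finite K" and indep: "indep_vars (\<lambda>_. borel) X K"
    and gauss: "\<And>k. k \<in> K \<Longrightarrow> distributed M lborel (X k) (\<lambda>x. ennreal (std_normal_density x))"
    and small: "2 * s * (\<Sum>k\<in>K. (c k)\<^sup>2) < 1"
  shows "(\<integral>\<^sup>+\<omega>. ennreal (exp (s * (\<Sum>k\<in>K. c k * X k \<omega>)\<^sup>2)) \<partial>M)
          = ennreal (1 / sqrt (1 - 2 * s * (\<Sum>k\<in>K. (c k)\<^sup>2)))"
proof -
  define v where "v = (\<Sum>k\<in>K. (c k)\<^sup>2)"
  define K' where "K' = {k\<in>K. c k \<noteq> 0}"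
  have sum_K': "(\<Sum>k\<in>K. c k * X k \<omega>) = (\<Sum>k\<in>K'. c k * X k \<omega>)" for \<omega>
    unfolding K'_def by (rule sum.mono_neutral_right) (use fin in auto)
  have v_K': "v = (\<Sum>k\<in>K'. \<bar>c k\<bar>\<^sup>2)"
    unfolding v_def K'_def by (simp, rule sum.mono_neutral_right) (use fin in auto)
  show ?thesis
  proof (cases "K' = {}")
    case True
    then show ?thesis
      using v_K' unfolding sum_K' v_def[symmetric] by (simp add: emeasure_space_1)
  next
    case False
    have v: "v > 0"
      using False fin unfolding v_K' K'_def by (intro sum_pos) auto
    have "indep_vars (\<lambda>_. borel) (\<lambda>k \<omega>. c k * X k \<omega>) K'"
      by (rule indep_vars_compose2[where Y="\<lambda>k x. c k * x", OF indep_vars_subset[OF indep]])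
         (auto simp: K'_def)
    moreover have "distributed M lborel (\<lambda>\<omega>. c k * X k \<omega>) (normal_density 0 \<bar>c k\<bar>)" if "k \<in> K'" for k
      using normal_density_affine[OF gauss[of k], of "c k" 0] that by (auto simp: K'_def)
    ultimately have sum_gauss: "distributed M lborel (\<lambda>\<omega>. \<Sum>k\<in>K'. c k * X k \<omega>) (normal_density 0 (sqrt v))"
      using sum_indep_normal[of K' "\<lambda>k \<omega>. c k * X k \<omega>" "\<lambda>k. \<bar>c k\<bar>" "\<lambda>_. 0"] False fin
      unfolding v_K' by (auto simp: K'_def)
    define q where "q = 1 - 2 * s * v"
    have q: "q > 0" using small unfolding q_def v_def by simp
    have "(\<integral>\<^sup>+\<omega>. ennreal (exp (s * (\<Sum>k\<in>K. c k * X k \<omega>)\<^sup>2)) \<partial>M)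
        = (\<integral>\<^sup>+x. ennreal (normal_density 0 (sqrt v) x) * ennreal (exp (s * x\<^sup>2)) \<partial>lborel)"
      unfolding sum_K' by (rule distributed_nn_integral[OF sum_gauss, symmetric]) simp
    also have "\<dots> = (\<integral>\<^sup>+x. ennreal (1 / sqrt q) * ennreal (normal_density 0 (sqrt v / sqrt q) x) \<partial>lborel)"
      using normal_density_mult_exp_square[of "sqrt v" q s] v q
      by (intro nn_integral_cong) (simp add: q_def ennreal_mult'[symmetric] normal_density_nonneg)
    also have "\<dots> = ennreal (1 / sqrt q) * (\<integral>\<^sup>+x. ennreal (normal_density 0 (sqrt v / sqrt q) x) \<partial>lborel)"
      by (rule nn_integral_cmult) simp
    also have "(\<integral>\<^sup>+x. ennreal (normal_density 0 (sqrt v / sqrt q) x) \<partial>lborel) = 1"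
      using v q by (subst nn_integral_eq_integral) (auto intro!: integrable_normal_density)
    finally show ?thesis unfolding q_def v_def by simp
  qed
qed

lemma (in prob_space) nn_integral_exp_sum_squares_gaussian_blocks:
  assumes indep: "indep_vars (\<lambda>_. borel) X I"
    and gauss: "\<And>k. k \<in> I \<Longrightarrow> distributed M lborel (X k) (\<lambda>x. ennreal (std_normal_density x))"
    and S: "finite S" and disj: "disjoint_family_on B S"
    and B: "\<And>i. i \<in> S \<Longrightarrow> finite (B i) \<and> B i \<subseteq> I"
    and small: "\<And>i. i \<in> S \<Longrightarrow> 2 * s * (\<Sum>k\<in>B i. (c k)\<^sup>2) < 1"
  shows "(\<integral>\<^sup>+\<omega>. ennreal (exp (s * (\<Sum>i\<in>S. (\<Sum>k\<in>B i. c k * X k \<omega>)\<^sup>2))) \<partial>M)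
          = (\<Prod>i\<in>S. ennreal (1 / sqrt (1 - 2 * s * (\<Sum>k\<in>B i. (c k)\<^sup>2))))"
proof -
  define Z where "Z i \<omega> = ennreal (exp (s * (\<Sum>k\<in>B i. c k * X k \<omega>)\<^sup>2))" for i \<omega>
  have blocks: "indep_vars (\<lambda>i. PiM (B i) (\<lambda>_. borel)) (\<lambda>i \<omega>. restrict (\<lambda>k. X k \<omega>) (B i)) S"
    by (rule indep_vars_restrict[OF indep]) (use B disj in auto)
  have "(\<lambda>r. ennreal (exp (s * (\<Sum>k\<in>B i. c k * r k)\<^sup>2))) \<in> borel_measurable (PiM (B i) (\<lambda>_. borel))"
    if "i \<in> S" for i
    by measurable
  then have "indep_vars (\<lambda>_. borel) (\<lambda>i \<omega>. ennreal (exp (s * (\<Sum>k\<in>B i. c k * restrict (\<lambda>k. X k \<omega>) (B i) k)\<^sup>2))) S"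
    by (rule indep_vars_compose2[OF blocks])
  then have indep_Z: "indep_vars (\<lambda>_. borel) Z S"
    unfolding Z_def by simp
  have "(\<integral>\<^sup>+\<omega>. ennreal (exp (s * (\<Sum>i\<in>S. (\<Sum>k\<in>B i. c k * X k \<omega>)\<^sup>2))) \<partial>M) = (\<integral>\<^sup>+\<omega>. (\<Prod>i\<in>S. Z i \<omega>) \<partial>M)"
    using S by (simp add: Z_def sum_distrib_left exp_sum prod_ennreal)
  also have "\<dots> = (\<Prod>i\<in>S. \<integral>\<^sup>+\<omega>. Z i \<omega> \<partial>M)"
    by (rule indep_vars_nn_integral[OF S indep_Z]) simp
  also have "\<dots> = (\<Prod>i\<in>S. ennreal (1 / sqrt (1 - 2 * s * (\<Sum>k\<in>B i. (c k)\<^sup>2))))"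
    unfolding Z_def using B gauss small
    by (intro prod.cong refl nn_integral_exp_square_gaussian_sum indep_vars_subset[OF indep]) auto
  finally show ?thesis .
qed

lemma (in prob_space) nn_integral_indep_var_le:
  assumes indep: "indep_var N P N' Y" and g: "g \<in> borel_measurable (N \<Otimes>\<^sub>M N')"
    and bound: "\<And>p. p \<in> space N \<Longrightarrow> (\<integral>\<^sup>+\<omega>. g (p, Y \<omega>) \<partial>M) \<le> B"
  shows "(\<integral>\<^sup>+\<omega>. g (P \<omega>, Y \<omega>) \<partial>M) \<le> B"
proof -
  have P: "random_variable N P" and Y: "random_variable N' Y"
    using indep by (auto dest: indep_var_rv1 indep_var_rv2)
  interpret DP: prob_space "distr M N P" by (rule prob_space_distr[OF P])
  interpret DY: prob_space "distr M N' Y" by (rule prob_space_distr[OF Y])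
  have "sets (distr M N P \<Otimes>\<^sub>M distr M N' Y) = sets (N \<Otimes>\<^sub>M N')"
    by (intro sets_pair_measure_cong) auto
  then have g': "g \<in> borel_measurable (distr M N P \<Otimes>\<^sub>M distr M N' Y)"
    using g by (simp cong: measurable_cong_sets)
  have "(\<integral>\<^sup>+\<omega>. g (P \<omega>, Y \<omega>) \<partial>M) = (\<integral>\<^sup>+z. g z \<partial>distr M (N \<Otimes>\<^sub>M N') (\<lambda>\<omega>. (P \<omega>, Y \<omega>)))"
    by (rule nn_integral_distr[symmetric, OF measurable_Pair[OF P Y]]) (simp add: g)
  also have "\<dots> = (\<integral>\<^sup>+z. g z \<partial>(distr M N P \<Otimes>\<^sub>M distr M N' Y))"
    using indep unfolding indep_var_distribution_eq by simp
  also have "\<dots> = (\<integral>\<^sup>+p. \<integral>\<^sup>+r. g (p, r) \<partial>distr M N' Y \<partial>distr M N P)"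
    by (rule DY.nn_integral_fst[symmetric, OF g'])
  also have "\<dots> \<le> (\<integral>\<^sup>+p. B \<partial>distr M N P)"
  proof (rule nn_integral_mono)
    fix p assume "p \<in> space (distr M N P)"
    moreover have "(\<lambda>r. g (p, r)) \<in> borel_measurable N'"
      if "p \<in> space N" using measurable_Pair2[OF g that] .
    ultimately show "(\<integral>\<^sup>+r. g (p, r) \<partial>distr M N' Y) \<le> B"
      using bound by (simp add: nn_integral_distr[OF Y])
  qed
  also have "\<dots> = B"
    using DP.emeasure_space_1 by simp
  finally show ?thesis .
qed

section \<open>The activation and the forward pass\<close>

lemma lista_sigma_zero [simp]: "lista_sigma lam 0 = 0"
  by (simp add: lista_sigma_def)

lemma lista_sigma_uminus: "lista_sigma lam (- x) = - lista_sigma lam x"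
  by (simp add: lista_sigma_def)

lemma lista_sigma_between_0_and_id:
  assumes lam: "lam \<ge> 0" and x: "x \<ge> 0"
  shows "0 \<le> lista_sigma lam x \<and> lista_sigma lam x \<le> x"
proof
  show "0 \<le> lista_sigma lam x"
    using x by (simp add: lista_sigma_def add_pos_pos)
  have "(exp x - 1) * (1 - exp (- lam)) \<ge> 0"
    using x lam by (intro mult_nonneg_nonneg) auto
  then have "1 + exp (x - lam) \<le> exp x * (1 + exp (- x - lam))"
    by (simp add: algebra_simps flip: exp_add)
  then have "ln (1 + exp (x - lam)) \<le> ln (exp x * (1 + exp (- x - lam)))"
    by (simp add: add_pos_pos)
  also have "\<dots> = x + ln (1 + exp (- x - lam))"
    by (simp add: ln_mult_pos add_pos_pos)
  finally show "lista_sigma lam x \<le> x"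
    unfolding lista_sigma_def by simp
qed

lemma abs_lista_sigma_le:
  assumes "lam \<ge> 0"
  shows "\<bar>lista_sigma lam x\<bar> \<le> \<bar>x\<bar>"
  using lista_sigma_between_0_and_id[OF assms, of x] lista_sigma_between_0_and_id[OF assms, of "- x"]
  by (cases "x \<ge> 0") (auto simp: lista_sigma_uminus)

lemma borel_measurable_lista_sigma [measurable]: "lista_sigma lam \<in> borel_measurable borel"
  unfolding lista_sigma_def by measurable

lemma lista_x_cong:
  assumes "\<And>l' i j. 1 \<le> l' \<Longrightarrow> l' \<le> k \<Longrightarrow> i < m \<Longrightarrow> j < n \<Longrightarrow> W1 l' i j = W1' l' i j"
    and "\<And>l' i j. 1 \<le> l' \<Longrightarrow> l' \<le> k \<Longrightarrow> i < m \<Longrightarrow> j < m \<Longrightarrow> W2 l' i j = W2' l' i j"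
    and "j < m"
  shows "lista_x lam m n y x0 W1 W2 k j = lista_x lam m n y x0 W1' W2' k j"
  using assms
proof (induction k arbitrary: j)
  case 0
  then show ?case by simp
next
  case (Suc k)
  have "lista_x lam m n y x0 W1 W2 k j' = lista_x lam m n y x0 W1' W2' k j'" if "j' < m" for j'
    using Suc.prems that by (intro Suc.IH) auto
  then show ?case
    using Suc.prems by (auto intro!: arg_cong[where f="lista_sigma lam"] sum.cong)
qed

lemma borel_measurable_lista_x:
  assumes "\<And>l' i j. 1 \<le> l' \<Longrightarrow> l' \<le> k \<Longrightarrow> i < m \<Longrightarrow> j < n \<Longrightarrow> A l' i j \<in> borel_measurable N"
    and "\<And>l' i j. 1 \<le> l' \<Longrightarrow> l' \<le> k \<Longrightarrow> i < m \<Longrightarrow> j < m \<Longrightarrow> B l' i j \<in> borel_measurable N"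
    and "j < m"
  shows "(\<lambda>\<omega>. lista_x lam m n y x0 (\<lambda>l i j. A l i j \<omega>) (\<lambda>l i j. B l i j \<omega>) k j) \<in> borel_measurable N"
  using assms
proof (induction k arbitrary: j)
  case 0
  then show ?case by simp
next
  case (Suc k)
  have [measurable]: "(\<lambda>\<omega>. lista_x lam m n y x0 (\<lambda>l i j. A l i j \<omega>) (\<lambda>l i j. B l i j \<omega>) k j') \<in> borel_measurable N"
    if "j' < m" for j'
    using Suc.prems that by (intro Suc.IH) auto
  have [measurable]: "A (Suc k) j j' \<in> borel_measurable N" if "j' < n" for j'
    using Suc.prems that by auto
  have [measurable]: "B (Suc k) j j' \<in> borel_measurable N" if "j' < m" for j'
    using Suc.prems that by auto
  show ?case
    using Suc.prems by simp measurable
qed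

type_synonym lista_weight_index = "(nat \<times> nat \<times> nat) + (nat \<times> nat \<times> nat)"

definition weight_layer :: "lista_weight_index \<Rightarrow> nat" where
  "weight_layer = case_sum fst fst"

lemma weight_layer_simps [simp]:
  "weight_layer (Inl (l, i, j)) = l" "weight_layer (Inr (l, i, j)) = l"
  by (simp_all add: weight_layer_def)

definition lista_row :: "nat \<Rightarrow> nat \<Rightarrow> nat \<Rightarrow> nat \<Rightarrow> lista_weight_index set" where
  "lista_row m n k i = (\<lambda>j. Inl (k, i, j)) ` {..<n} \<union> (\<lambda>j. Inr (k, i, j)) ` {..<m}"

lemma finite_lista_row [simp]: "finite (lista_row m n k i)"
  by (simp add: lista_row_def)

lemma sum_lista_row:
  "(\<Sum>\<kappa>\<in>lista_row m n k i. f \<kappa>) = (\<Sum>j<n. f (Inl (k, i, j))) + (\<Sum>j<m. f (Inr (k, i, j)))"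
  unfolding lista_row_def
  by (subst sum.union_disjoint) (auto simp: sum.reindex inj_on_def)

lemma disjoint_family_on_lista_row: "disjoint_family_on (lista_row m n k) S"
  by (auto simp: disjoint_family_on_def lista_row_def)

section \<open>The network at initialization\<close>

text \<open>The factor 4 makes the Chernoff bound for a whole layer (sqrt 2 / e)^m <= exp (- m / 2).\<close>

fun norm_sq_bound :: "real \<Rightarrow> real \<Rightarrow> nat \<Rightarrow> real" where
  "norm_sq_bound Cy Cx 0 = Cx\<^sup>2"
| "norm_sq_bound Cy Cx (Suc k) = 4 * (1 + Cy\<^sup>2 + norm_sq_bound Cy Cx k)"

definition var_bound :: "real \<Rightarrow> real \<Rightarrow> nat \<Rightarrow> real" where
  "var_bound Cy Cx k = 1 + Cy\<^sup>2 + norm_sq_bound Cy Cx k"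

lemma norm_sq_bound_nonneg: "norm_sq_bound Cy Cx k \<ge> 0"
  by (induction k) auto

lemma var_bound_pos: "var_bound Cy Cx k > 0"
  using norm_sq_bound_nonneg[of Cy Cx k] by (simp add: var_bound_def add_pos_nonneg)

locale lista_at_init =
  fixes M :: "'a measure" and L m n :: nat and y x0 :: "nat \<Rightarrow> real"
    and W1 W2 :: "nat \<Rightarrow> nat \<Rightarrow> nat \<Rightarrow> 'a \<Rightarrow> real" and lam Cy Cx :: real
  assumes init: "lista_init M L m n W1 W2" and lam: "lam \<ge> 0" and m_pos: "0 < m"
    and y_bound: "\<And>j. j < n \<Longrightarrow> \<bar>y j\<bar> \<le> Cy" and x0_bound: "\<And>j. j < m \<Longrightarrow> \<bar>x0 j\<bar> \<le> Cx"
begin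

sublocale prob_space M
  using init by (simp add: lista_init_def)

abbreviation I :: "lista_weight_index set" where
  "I \<equiv> lista_index L m n"

abbreviation weights :: "'a \<Rightarrow> lista_weight_index \<Rightarrow> real" where
  "weights \<omega> \<equiv> \<lambda>\<kappa>. lista_weight W1 W2 \<kappa> \<omega>"

lemma indep_weights: "indep_vars (\<lambda>_. borel) (lista_weight W1 W2) I"
  using init by (simp add: lista_init_def)

lemma gaussian_weight:
  "\<kappa> \<in> I \<Longrightarrow> distributed M lborel (lista_weight W1 W2 \<kappa>) (\<lambda>x. ennreal (std_normal_density x))"
  using init by (simp add: lista_init_def)

lemma borel_measurable_weight: "\<kappa> \<in> I \<Longrightarrow> (\<lambda>\<omega>. weights \<omega> \<kappa>) \<in> borel_measurable M"
  using distributed_measurable[OF gaussian_weight] by simp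

lemma mem_lista_index_iff [simp]:
  "Inl (l, i, j) \<in> I \<longleftrightarrow> 1 \<le> l \<and> l \<le> L \<and> i < m \<and> j < n"
  "Inr (l, i, j) \<in> I \<longleftrightarrow> 1 \<le> l \<and> l \<le> L \<and> i < m \<and> j < m"
  by (auto simp: lista_index_def)

lemma lista_row_subset:
  "1 \<le> k \<Longrightarrow> k \<le> L \<Longrightarrow> i < m \<Longrightarrow> lista_row m n k i \<subseteq> {\<kappa> \<in> I. weight_layer \<kappa> = k}"
  by (auto simp: lista_row_def)

text \<open>The network is evaluated at an arbitrary assignment p of values to all weights, so that it can
  be restricted to the weights of earlier layers.\<close>

definition act :: "nat \<Rightarrow> (lista_weight_index \<Rightarrow> real) \<Rightarrow> nat \<Rightarrow> real" where
  "act k p = lista_x lam m n y x0 (\<lambda>l i j. p (Inl (l, i, j))) (\<lambda>l i j. p (Inr (l, i, j))) k"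

definition coef :: "nat \<Rightarrow> (lista_weight_index \<Rightarrow> real) \<Rightarrow> lista_weight_index \<Rightarrow> real" where
  "coef k p \<kappa> = (case \<kappa> of Inl (_, _, j) \<Rightarrow> y j / sqrt n | Inr (_, _, j) \<Rightarrow> act (k - 1) p j / sqrt m)"

definition preact :: "nat \<Rightarrow> (lista_weight_index \<Rightarrow> real) \<Rightarrow> nat \<Rightarrow> real" where
  "preact k p i = (\<Sum>\<kappa>\<in>lista_row m n k i. coef k p \<kappa> * p \<kappa>)"

definition row_var :: "nat \<Rightarrow> (lista_weight_index \<Rightarrow> real) \<Rightarrow> real" where
  "row_var k p = (\<Sum>j<n. (y j / sqrt n)\<^sup>2) + (\<Sum>j<m. (act (k - 1) p j / sqrt m)\<^sup>2)"

lemma act_weights: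
  "act k (weights \<omega>) = lista_x lam m n y x0 (\<lambda>l i j. W1 l i j \<omega>) (\<lambda>l i j. W2 l i j \<omega>) k"
  by (simp add: act_def lista_weight_def)

lemma act_Suc: "act (Suc k) p i = lista_sigma lam (preact (Suc k) p i)"
  by (simp add: act_def preact_def coef_def sum_lista_row sum_distrib_left mult_ac)

lemma abs_act_le_abs_preact: "1 \<le> k \<Longrightarrow> \<bar>act k p i\<bar> \<le> \<bar>preact k p i\<bar>"
  using act_Suc[of "k - 1" p i] abs_lista_sigma_le[OF lam] by (cases k) auto

lemma sum_lista_row_coef_sq: "(\<Sum>\<kappa>\<in>lista_row m n k i. (coef k p \<kappa>)\<^sup>2) = row_var k p"
  by (simp add: sum_lista_row coef_def row_var_def)

lemma act_restrict:
  assumes "{\<kappa> \<in> I. weight_layer \<kappa> \<le> k} \<subseteq> A" and "k \<le> L" and "j < m"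
  shows "act k (restrict p A) j = act k p j"
  unfolding act_def by (rule lista_x_cong) (use assms in \<open>auto simp: subset_iff\<close>)

lemma coef_restrict_past:
  assumes "1 \<le> k" and "k \<le> L" and "\<kappa> \<in> lista_row m n k i"
  shows "coef k (restrict p {\<kappa> \<in> I. weight_layer \<kappa> < k}) \<kappa> = coef k p \<kappa>"
  using assms by (cases k) (auto simp: coef_def lista_row_def intro!: act_restrict)

lemma row_var_restrict_past:
  assumes "1 \<le> k" and "k \<le> L"
  shows "row_var k (restrict p {\<kappa> \<in> I. weight_layer \<kappa> < k}) = row_var k p"
  using assms by (cases k) (auto simp: row_var_def intro!: sum.cong arg_cong[where f = "\<lambda>x. x\<^sup>2"] act_restrict)

lemma borel_measurable_act:
  assumes "\<And>\<kappa>. \<kappa> \<in> I \<Longrightarrow> weight_layer \<kappa> \<le> k \<Longrightarrow> (\<lambda>\<omega>. F \<omega> \<kappa>) \<in> borel_measurable N"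
    and "k \<le> L" and "j < m"
  shows "(\<lambda>\<omega>. act k (F \<omega>) j) \<in> borel_measurable N"
  unfolding act_def by (rule borel_measurable_lista_x) (use assms in auto)

lemma borel_measurable_act_weights [measurable]:
  "k \<le> L \<Longrightarrow> j < m \<Longrightarrow> (\<lambda>\<omega>. act k (weights \<omega>) j) \<in> borel_measurable M"
  by (rule borel_measurable_act) (auto intro: borel_measurable_weight)

lemma borel_measurable_preact_weights [measurable]:
  assumes "1 \<le> k" "k \<le> L" "i < m"
  shows "(\<lambda>\<omega>. preact k (weights \<omega>) i) \<in> borel_measurable M"
proof -
  have [measurable]: "(\<lambda>\<omega>. weights \<omega> \<kappa>) \<in> borel_measurable M" if "\<kappa> \<in> lista_row m n k i" for \<kappa>
    using that assms lista_row_subset by (intro borel_measurable_weight) auto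
  have [measurable]: "(\<lambda>\<omega>. coef k (weights \<omega>) \<kappa>) \<in> borel_measurable M" if "\<kappa> \<in> lista_row m n k i" for \<kappa>
    using that assms by (auto simp: lista_row_def coef_def)
  show ?thesis
    unfolding preact_def by measurable
qed

lemma borel_measurable_row_var_weights [measurable]:
  "k \<le> L \<Longrightarrow> (\<lambda>\<omega>. row_var k (weights \<omega>)) \<in> borel_measurable M"
  unfolding row_var_def by measurable

lemma nn_integral_exp_row_sums_le:
  assumes k: "1 \<le> k" "k \<le> L" and S: "S \<subseteq> {..<m}" and U: "U > 0" and var: "row_var k p \<le> U"
  shows "(\<integral>\<^sup>+\<omega>. ennreal (exp ((\<Sum>i\<in>S. (\<Sum>\<kappa>\<in>lista_row m n k i. coef k p \<kappa> * weights \<omega> \<kappa>)\<^sup>2) / (4 * U))) \<partial>M)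
         \<le> ennreal (sqrt 2 ^ card S)"
proof -
  define q where "q = 1 - 2 * (1 / (4 * U)) * row_var k p"
  have q: "q \<ge> 1 / 2"
    using var U unfolding q_def by (simp add: field_simps)
  have "(\<integral>\<^sup>+\<omega>. ennreal (exp ((\<Sum>i\<in>S. (\<Sum>\<kappa>\<in>lista_row m n k i. coef k p \<kappa> * weights \<omega> \<kappa>)\<^sup>2) / (4 * U))) \<partial>M)
      = (\<integral>\<^sup>+\<omega>. ennreal (exp (1 / (4 * U) * (\<Sum>i\<in>S. (\<Sum>\<kappa>\<in>lista_row m n k i. coef k p \<kappa> * weights \<omega> \<kappa>)\<^sup>2))) \<partial>M)"
    by simp
  also have "\<dots> = (\<Prod>i\<in>S. ennreal (1 / sqrt (1 - 2 * (1 / (4 * U)) * (\<Sum>\<kappa>\<in>lista_row m n k i. (coef k p \<kappa>)\<^sup>2))))"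
    using S lista_row_subset[OF k] q unfolding q_def
    by (intro nn_integral_exp_sum_squares_gaussian_blocks[OF indep_weights gaussian_weight])
       (auto simp: finite_subset disjoint_family_on_lista_row sum_lista_row_coef_sq)
  also have "\<dots> = (\<Prod>i\<in>S. ennreal (1 / sqrt q))"
    unfolding q_def sum_lista_row_coef_sq ..
  also have "\<dots> = ennreal ((1 / sqrt q) ^ card S)"
    using q by (simp add: ennreal_power)
  also have "\<dots> \<le> ennreal (sqrt 2 ^ card S)"
  proof -
    have "1 \<le> sqrt 2 * sqrt q"
      using q by (simp add: real_sqrt_mult[symmetric])
    then have "1 / sqrt q \<le> sqrt 2"
      using q by (simp add: field_simps)
    then show ?thesis
      using q by (intro ennreal_leI power_mono) auto
  qed
  finally show ?thesis .
qed

lemma nn_integral_exp_preact_sq_le: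
  assumes k: "1 \<le> k" "k \<le> L" and S: "S \<subseteq> {..<m}" and U: "U > 0"
  shows "(\<integral>\<^sup>+\<omega>. ennreal (exp ((\<Sum>i\<in>S. (preact k (weights \<omega>) i)\<^sup>2) / (4 * U)))
            * indicator {\<omega> \<in> space M. row_var k (weights \<omega>) \<le> U} \<omega> \<partial>M)
         \<le> ennreal (sqrt 2 ^ card S)"
proof -
  define Past where "Past = {\<kappa> \<in> I. weight_layer \<kappa> < k}"
  define Cur where "Cur = {\<kappa> \<in> I. weight_layer \<kappa> = k}"
  txt \<open>The weights in Past determine coef k and row_var k and are independent of those in Cur.\<close>
  define N where "N = PiM Past (\<lambda>_. borel :: real measure)"
  define N' where "N' = PiM Cur (\<lambda>_. borel :: real measure)"
  define g where "g z = ennreal (exp ((\<Sum>i\<in>S. (\<Sum>\<kappa>\<in>lista_row m n k i. coef k (fst z) \<kappa> * snd z \<kappa>)\<^sup>2) / (4 * U)))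
      * indicator {p. row_var k p \<le> U} (fst z)" for z
  obtain k' where k': "k = Suc k'"
    using k by (cases k) auto
  have row: "\<kappa> \<in> Cur" if "i \<in> S" "\<kappa> \<in> lista_row m n k i" for i \<kappa>
    using lista_row_subset[OF k] that S unfolding Cur_def by auto
  have "(\<integral>\<^sup>+\<omega>. ennreal (exp ((\<Sum>i\<in>S. (preact k (weights \<omega>) i)\<^sup>2) / (4 * U)))
            * indicator {\<omega> \<in> space M. row_var k (weights \<omega>) \<le> U} \<omega> \<partial>M)
      = (\<integral>\<^sup>+\<omega>. g (restrict (weights \<omega>) Past, restrict (weights \<omega>) Cur) \<partial>M)"
  proof (rule nn_integral_cong)
    fix \<omega> assume "\<omega> \<in> space M"
    moreover have "coef k (restrict (weights \<omega>) Past) \<kappa> * restrict (weights \<omega>) Cur \<kappa>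
        = coef k (weights \<omega>) \<kappa> * weights \<omega> \<kappa>" if "i \<in> S" "\<kappa> \<in> lista_row m n k i" for i \<kappa>
      using that row coef_restrict_past[OF k] unfolding Past_def by auto
    moreover have "row_var k (restrict (weights \<omega>) Past) = row_var k (weights \<omega>)"
      using row_var_restrict_past[OF k] unfolding Past_def .
    ultimately show "ennreal (exp ((\<Sum>i\<in>S. (preact k (weights \<omega>) i)\<^sup>2) / (4 * U)))
            * indicator {\<omega> \<in> space M. row_var k (weights \<omega>) \<le> U} \<omega>
        = g (restrict (weights \<omega>) Past, restrict (weights \<omega>) Cur)"
      unfolding g_def preact_def by (simp add: indicator_def)
  qed
  also have "\<dots> \<le> ennreal (sqrt 2 ^ card S)"
  proof (rule nn_integral_indep_var_le)
    show "indep_var N (\<lambda>\<omega>. restrict (weights \<omega>) Past) N' (\<lambda>\<omega>. restrict (weights \<omega>) Cur)"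
      unfolding N_def N'_def
      by (rule indep_var_restrict[OF indep_weights]) (auto simp: Past_def Cur_def)
    have [measurable]: "(\<lambda>p. act k' p j) \<in> borel_measurable N" if "j < m" for j
      using k k' that unfolding N_def
      by (intro borel_measurable_act measurable_component_singleton) (auto simp: Past_def)
    have [measurable]: "(\<lambda>p. coef k p \<kappa>) \<in> borel_measurable N" if "i \<in> S" "\<kappa> \<in> lista_row m n k i" for i \<kappa>
      using that by (auto simp: coef_def lista_row_def k')
    have [measurable]: "(\<lambda>r. r \<kappa>) \<in> borel_measurable N'" if "i \<in> S" "\<kappa> \<in> lista_row m n k i" for i \<kappa>
      using row[OF that] unfolding N'_def by (intro measurable_component_singleton)
    have [measurable]: "(\<lambda>p. row_var k p) \<in> borel_measurable N"
      unfolding row_var_def k' diff_Suc_1 by measurable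
    show "g \<in> borel_measurable (N \<Otimes>\<^sub>M N')"
      unfolding g_def by measurable
  next
    fix p
    have "(\<integral>\<^sup>+\<omega>. g (p, restrict (weights \<omega>) Cur) \<partial>M)
        = (\<integral>\<^sup>+\<omega>. ennreal (exp ((\<Sum>i\<in>S. (\<Sum>\<kappa>\<in>lista_row m n k i. coef k p \<kappa> * weights \<omega> \<kappa>)\<^sup>2) / (4 * U)))
            * indicator {p. row_var k p \<le> U} p \<partial>M)"
      using row by (intro nn_integral_cong) (auto simp: g_def intro!: sum.cong)
    also have "\<dots> \<le> ennreal (sqrt 2 ^ card S)"
      using nn_integral_exp_row_sums_le[OF k S U] by (simp add: indicator_def)
    finally show "(\<integral>\<^sup>+\<omega>. g (p, restrict (weights \<omega>) Cur) \<partial>M) \<le> ennreal (sqrt 2 ^ card S)" .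
  qed
  finally show ?thesis .
qed

lemma measure_preact_sq_gt_le:
  assumes k: "1 \<le> k" "k \<le> L" and S: "S \<subseteq> {..<m}" and U: "U > 0"
  shows "measure M {\<omega> \<in> space M. row_var k (weights \<omega>) \<le> U \<and> a < (\<Sum>i\<in>S. (preact k (weights \<omega>) i)\<^sup>2)}
           \<le> sqrt 2 ^ card S * exp (- a / (4 * U))"
proof -
  define u where "u \<omega> = ennreal (exp ((\<Sum>i\<in>S. (preact k (weights \<omega>) i)\<^sup>2) / (4 * U)))" for \<omega>
  define A where "A = {\<omega> \<in> space M. row_var k (weights \<omega>) \<le> U}"
  define c where "c = ennreal (exp (- a / (4 * U)))"
  have [measurable]: "(\<lambda>\<omega>. preact k (weights \<omega>) i) \<in> borel_measurable M" if "i \<in> S" for i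
    using k S that by (intro borel_measurable_preact_weights) auto
  have A [measurable]: "A \<in> sets M"
    using k unfolding A_def by measurable
  have "{\<omega> \<in> space M. row_var k (weights \<omega>) \<le> U \<and> a < (\<Sum>i\<in>S. (preact k (weights \<omega>) i)\<^sup>2)}
      \<subseteq> {\<omega> \<in> A. 1 \<le> c * u \<omega>}"
    using U by (auto simp: A_def c_def u_def ennreal_mult'[symmetric] divide_right_mono
        simp flip: exp_add add_divide_distrib)
  then have "emeasure M {\<omega> \<in> space M. row_var k (weights \<omega>) \<le> U \<and> a < (\<Sum>i\<in>S. (preact k (weights \<omega>) i)\<^sup>2)}
      \<le> c * (\<integral>\<^sup>+\<omega>. u \<omega> * indicator A \<omega> \<partial>M)"
    by (intro order.trans[OF emeasure_mono nn_integral_Markov_inequality]) (auto simp: u_def)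
  also have "\<dots> \<le> c * ennreal (sqrt 2 ^ card S)"
    unfolding u_def A_def by (intro mult_left_mono nn_integral_exp_preact_sq_le k S U) simp
  also have "\<dots> = ennreal (sqrt 2 ^ card S * exp (- a / (4 * U)))"
    by (simp add: c_def ennreal_mult'[symmetric] mult.commute)
  finally show ?thesis
    by (simp add: emeasure_eq_measure)
qed

definition bounded_norm :: "nat \<Rightarrow> 'a set" where
  "bounded_norm k = {\<omega> \<in> space M. (\<Sum>j<m. (act k (weights \<omega>) j)\<^sup>2) \<le> norm_sq_bound Cy Cx k * m}"

lemma sets_bounded_norm [measurable]: "k \<le> L \<Longrightarrow> bounded_norm k \<in> sets M"
  unfolding bounded_norm_def by measurable

lemma bounded_norm_0: "bounded_norm 0 = space M"
proof -
  have "(x0 j)\<^sup>2 \<le> Cx\<^sup>2" if "j < m" for j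
    using x0_bound[OF that] by (simp add: power2_le_iff_abs_le)
  then have "(\<Sum>j<m. (x0 j)\<^sup>2) \<le> (\<Sum>j<m. Cx\<^sup>2)"
    by (intro sum_mono) simp
  then show ?thesis
    by (auto simp: bounded_norm_def act_def mult.commute)
qed

lemma row_var_le_var_bound:
  assumes "\<omega> \<in> bounded_norm k"
  shows "row_var (Suc k) (weights \<omega>) \<le> var_bound Cy Cx k"
proof -
  have "(\<Sum>j<n. (y j / sqrt n)\<^sup>2) \<le> Cy\<^sup>2"
  proof (cases "n = 0")
    case False
    have y_sq: "(y j)\<^sup>2 \<le> Cy\<^sup>2" if "j < n" for j
      using y_bound[OF that] by (simp add: power2_le_iff_abs_le)
    have "(\<Sum>j<n. (y j / sqrt n)\<^sup>2) = (\<Sum>j<n. (y j)\<^sup>2) / n"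
      by (simp add: power_divide sum_divide_distrib)
    also have "\<dots> \<le> (\<Sum>j<n. Cy\<^sup>2) / n"
      by (intro divide_right_mono sum_mono) (simp_all add: y_sq)
    finally show ?thesis
      using False by simp
  qed simp
  moreover have "(\<Sum>j<m. (act k (weights \<omega>) j / sqrt m)\<^sup>2) \<le> norm_sq_bound Cy Cx k"
    using assms m_pos by (simp add: bounded_norm_def power_divide sum_divide_distrib[symmetric] divide_le_eq)
  ultimately show ?thesis
    by (simp add: row_var_def var_bound_def)
qed

lemma measure_bounded_norm_Diff_le:
  assumes k: "k < L"
  shows "measure M (bounded_norm k - bounded_norm (Suc k)) \<le> exp (- real m / 2)"
proof -
  define U where "U = var_bound Cy Cx k"
  define E where "E = {\<omega> \<in> space M. row_var (Suc k) (weights \<omega>) \<le> U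
      \<and> 4 * U * m < (\<Sum>i\<in>{..<m}. (preact (Suc k) (weights \<omega>) i)\<^sup>2)}"
  have U: "U > 0"
    unfolding U_def by (rule var_bound_pos)
  have "bounded_norm k - bounded_norm (Suc k) \<subseteq> E"
  proof
    fix \<omega> assume \<omega>: "\<omega> \<in> bounded_norm k - bounded_norm (Suc k)"
    then have "4 * U * m < (\<Sum>j<m. (act (Suc k) (weights \<omega>) j)\<^sup>2)"
      by (auto simp: bounded_norm_def U_def var_bound_def)
    also have "\<dots> \<le> (\<Sum>i<m. (preact (Suc k) (weights \<omega>) i)\<^sup>2)"
      using abs_act_le_abs_preact by (intro sum_mono) (simp add: abs_le_square_iff)
    finally show "\<omega> \<in> E"
      using \<omega> row_var_le_var_bound unfolding E_def U_def by (auto simp: bounded_norm_def)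
  qed
  then have "measure M (bounded_norm k - bounded_norm (Suc k)) \<le> measure M E"
    using k unfolding E_def by (intro finite_measure_mono) measurable
  also have "\<dots> \<le> sqrt 2 ^ m * exp (- (4 * U * m) / (4 * U))"
    using measure_preact_sq_gt_le[of "Suc k" "{..<m}" U "4 * U * m"] k U unfolding E_def by simp
  also have "\<dots> = sqrt 2 ^ m * exp (- real m)"
    using U by simp
  also have "\<dots> \<le> exp (real m / 2) * exp (- real m)"
    using sqrt_2_power_le_exp[of m] by (intro mult_right_mono) auto
  also have "\<dots> = exp (- real m / 2)"
    by (simp flip: exp_add)
  finally show ?thesis .
qed

lemma measure_abs_act_gt_le:
  assumes l: "1 \<le> l" "l \<le> L" and i: "i < m" and t: "t \<ge> 0"
  shows "measure M {\<omega> \<in> space M. t < \<bar>act l (weights \<omega>) i\<bar>}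
           \<le> real (l - 1) * exp (- real m / 2) + sqrt 2 * exp (- t\<^sup>2 / (4 * var_bound Cy Cx (l - 1)))"
proof -
  obtain k where k: "l = Suc k"
    using l by (cases l) auto
  define U where "U = var_bound Cy Cx k"
  have U: "U > 0"
    unfolding U_def by (rule var_bound_pos)
  define A where "A = (\<Union>k'<k. bounded_norm k' - bounded_norm (Suc k'))"
  define B where "B = {\<omega> \<in> space M. row_var (Suc k) (weights \<omega>) \<le> U \<and> t\<^sup>2 < (preact (Suc k) (weights \<omega>) i)\<^sup>2}"
  have [measurable]: "A \<in> sets M"
    using l k unfolding A_def by (intro sets.finite_UN sets.Diff sets_bounded_norm) auto
  have [measurable]: "(\<lambda>\<omega>. preact (Suc k) (weights \<omega>) i) \<in> borel_measurable M"
    "(\<lambda>\<omega>. row_var (Suc k) (weights \<omega>)) \<in> borel_measurable M"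
    using l k i by (auto intro: borel_measurable_preact_weights borel_measurable_row_var_weights)
  have [measurable]: "B \<in> sets M"
    unfolding B_def by measurable
  have "{\<omega> \<in> space M. t < \<bar>act l (weights \<omega>) i\<bar>} \<subseteq> A \<union> B"
  proof
    fix \<omega> assume \<omega>: "\<omega> \<in> {\<omega> \<in> space M. t < \<bar>act l (weights \<omega>) i\<bar>}"
    show "\<omega> \<in> A \<union> B"
    proof (cases "\<omega> \<in> bounded_norm k")
      case True
      have "t < \<bar>preact (Suc k) (weights \<omega>) i\<bar>"
        using \<omega> abs_act_le_abs_preact[of "Suc k" "weights \<omega>" i] unfolding k by auto
      then have "t\<^sup>2 < (preact (Suc k) (weights \<omega>) i)\<^sup>2"
        using t by (simp add: abs_le_square_iff[symmetric] flip: not_le)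
      then show ?thesis
        using True \<omega> row_var_le_var_bound unfolding B_def U_def by auto
    next
      case False
      then show ?thesis
        using \<omega> Diff_subset_UN_Diff_Suc[of bounded_norm k] unfolding A_def bounded_norm_0 by blast
    qed
  qed
  then have "measure M {\<omega> \<in> space M. t < \<bar>act l (weights \<omega>) i\<bar>} \<le> measure M (A \<union> B)"
    by (intro finite_measure_mono) measurable
  also have "\<dots> \<le> measure M A + measure M B"
    by (intro measure_Un_le) measurable
  also have "measure M A \<le> (\<Sum>k'<k. measure M (bounded_norm k' - bounded_norm (Suc k')))"
    unfolding A_def using l k by (intro measure_UNION_le) auto
  also have "\<dots> \<le> (\<Sum>k'<k. exp (- real m / 2))"
    using l k by (intro sum_mono measure_bounded_norm_Diff_le) auto
  also have "measure M B \<le> sqrt 2 * exp (- t\<^sup>2 / (4 * U))"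
    using measure_preact_sq_gt_le[of "Suc k" "{i}" U "t\<^sup>2"] l k i U unfolding B_def by simp
  finally show ?thesis
    by (simp add: k U_def)
qed

lemma prob_abs_act_le_ln:
  assumes l: "1 \<le> l" "l \<le> L" and i: "i < m"
  shows "prob {\<omega> \<in> space M. \<bar>act l (weights \<omega>) i\<bar> \<le> ln m}
           \<ge> 1 - 2 * exp (- (ln m)\<^sup>2 / (32 * (real (l - 1) + 1)\<^sup>2 * (1 + 4 * var_bound Cy Cx (l - 1))))"
proof -
  define A where "A = {\<omega> \<in> space M. ln m < \<bar>act l (weights \<omega>) i\<bar>}"
  have "A \<in> sets M"
    using l i borel_measurable_act_weights[of l i] unfolding A_def by auto
  moreover have "{\<omega> \<in> space M. \<bar>act l (weights \<omega>) i\<bar> \<le> ln m} = space M - A"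
    by (auto simp: A_def)
  moreover have "prob A \<le> real (l - 1) * exp (- real m / 2) + sqrt 2 * exp (- (ln m)\<^sup>2 / (4 * var_bound Cy Cx (l - 1)))"
    using l i m_pos unfolding A_def by (intro measure_abs_act_gt_le) auto
  then have "prob A \<le> 2 * exp (- (ln m)\<^sup>2 / (32 * (real (l - 1) + 1)\<^sup>2 * (1 + 4 * var_bound Cy Cx (l - 1))))"
    using tail_le_two_exp_neg_ln_sq[OF var_bound_pos _ _ prob_le_1] m_pos by simp
  ultimately show ?thesis
    by (simp add: prob_compl)
qed

end

theorem lemma5:
  fixes lam C_y C_x :: real and l :: nat
  assumes "lam > 0"
  shows "\<exists>c > 0. \<forall>(M :: 'a measure) L m n y x0 W1 W2 i.
     l \<in> {1..L} \<and> i < m \<and> lista_init M L m n W1 W2 \<and>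
     (\<forall>j<n. \<bar>y j\<bar> \<le> C_y) \<and> (\<forall>j<m. \<bar>x0 j\<bar> \<le> C_x) \<longrightarrow>
     measure M {\<omega> \<in> space M.
        \<bar>lista_x lam m n y x0 (\<lambda>l i j. W1 l i j \<omega>) (\<lambda>l i j. W2 l i j \<omega>) l i\<bar>
          \<le> ln (real m) + \<bar>lista_sigma lam 0\<bar>}
       \<ge> 1 - 2 * exp (- c * (ln (real m))\<^sup>2)"
proof -
  define c where "c = 1 / (32 * (real (l - 1) + 1)\<^sup>2 * (1 + 4 * var_bound C_y C_x (l - 1)))"
  have "c > 0"
    using var_bound_pos[of C_y C_x "l - 1"] unfolding c_def by (simp add: add_pos_pos)
  moreover have "measure M {\<omega> \<in> space M.
        \<bar>lista_x lam m n y x0 (\<lambda>l i j. W1 l i j \<omega>) (\<lambda>l i j. W2 l i j \<omega>) l i\<bar>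
          \<le> ln (real m) + \<bar>lista_sigma lam 0\<bar>} \<ge> 1 - 2 * exp (- c * (ln (real m))\<^sup>2)"
    if H: "l \<in> {1..L} \<and> i < m \<and> lista_init M L m n W1 W2 \<and>
      (\<forall>j<n. \<bar>y j\<bar> \<le> C_y) \<and> (\<forall>j<m. \<bar>x0 j\<bar> \<le> C_x)"
    for M :: "'a measure" and L m n y x0 W1 W2 i
  proof -
    interpret lista_at_init M L m n y x0 W1 W2 lam C_y C_x
      using H assms by unfold_locales auto
    show ?thesis
      using prob_abs_act_le_ln[of l i] H by (simp add: act_weights c_def)
  qed
  ultimately show ?thesis
    by blast
qed

end
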